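(* Let $(L_n)_{n\in\mathbb N}$ be an integer sequence with $L_n\ge\tilde c\log n$ for some $\tilde c>0$ and all $n$. Then there is a sequence $(\delta_n)$ with $\delta_n\to0$ such that, for all $n$ large enough, with $\mathrm{GW}$-probability at least $1-n^{-2}$ the following holds: for every site $x\in\mathcal Z_{\lceil L_n(1+\delta_n)\rceil}$ there exists a site $y$ on the directed path from the root to $x$ with $|y|\ge L_n$ and $\deg(y)\le\log\log n$.
   Context: $\mu$: offspring distribution on $\mathbb N_0$ with $p_0=0$ and mean $\mathfrak m=\sum_\ell\ell\mu(\ell)\in(1,\infty)$; $\mathrm{GW}$ the law of the Galton--Watson tree with offspring distribution $\mu$, root $o$, edges directed from parent to child; $|y|$ distance to $o$, $\mathcal Z_\ell$ the $\ell$-th generation; $\deg$ the degree in the tree. *)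

theory Defs
  imports "HOL-Probability.Probability" "HOL-Library.Sublist"
begin

text \<open>A sample \<open>\<omega>\<close> assigns to every
  Ulam--Harris label \<open>u :: nat list\<close> an offspring number \<open>\<omega> u\<close>; these are i.i.d. with law \<open>\<mu>\<close>.
  The root is \<open>[]\<close>, the children of \<open>u\<close> are \<open>u @ [i]\<close> for \<open>i < \<omega> u\<close>.\<close>

definition GW :: "nat pmf \<Rightarrow> (nat list \<Rightarrow> nat) measure" where
  "GW \<mu> = PiM UNIV (\<lambda>_::nat list. measure_pmf \<mu>)"

definition in_tree :: "(nat list \<Rightarrow> nat) \<Rightarrow> nat list \<Rightarrow> bool" where
  "in_tree \<omega> u \<longleftrightarrow> (\<forall>k < length u. u ! k < \<omega> (take k u))"

definition generation :: "(nat list \<Rightarrow> nat) \<Rightarrow> nat \<Rightarrow> nat list set" where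
  "generation \<omega> l = {u. in_tree \<omega> u \<and> length u = l}"

text \<open>Degree in the (undirected) tree: number of children plus one edge to the parent
  for non-root vertices.\<close>
definition tree_deg :: "(nat list \<Rightarrow> nat) \<Rightarrow> nat list \<Rightarrow> nat" where
  "tree_deg \<omega> u = \<omega> u + (if u = [] then 0 else 1)"

end

theory Submission
  imports Defs
begin

text \<open>A first-moment bound. If no ancestor of \<open>x \<in> Z_N\<close> at height \<open>\<ge> l\<close> has degree
  \<open>\<le> ln ln n\<close>, each of them has at least \<open>K = \<lfloor>ln ln n\<rfloor>\<close> children. Summing over Ulam--Harris
  labels, \<open>x ! j < \<omega> (take j x)\<close> turns the offspring law into its size-biased version, so the
  expected number of such \<open>x\<close> is \<open>m ^ l * E[\<xi>; \<xi> \<ge> K] ^ (N - l)\<close>. As \<open>E[\<xi>; \<xi> \<ge> K] \<le> \<epsilon>\<^sub>n \<rightarrow> 0\<close>,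
  taking \<open>N - l \<ge> \<delta>\<^sub>n l\<close> with \<open>\<delta>\<^sub>n = (ln m + 2 / c) / ln (1 / \<epsilon>\<^sub>n)\<close> makes this at most
  \<open>exp (- 2 l / c) \<le> n powr -2\<close>.\<close>

lemma emeasure_UN_countable_le:
  assumes [measurable]: "\<And>i. i \<in> I \<Longrightarrow> X i \<in> sets M" and I: "countable I"
  shows "emeasure M (\<Union>(X ` I)) \<le> (\<integral>\<^sup>+i. emeasure M (X i) \<partial>count_space I)"
proof -
  have [measurable]: "\<Union>(X ` I) \<in> sets M"
    using I by (intro sets.countable_UN') auto
  have "emeasure M (\<Union>(X ` I)) = (\<integral>\<^sup>+x. indicator (\<Union>(X ` I)) x \<partial>M)"
    by simp
  also have "\<dots> \<le> (\<integral>\<^sup>+x. \<integral>\<^sup>+i. indicator (X i) x \<partial>count_space I \<partial>M)"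
  proof (intro nn_integral_mono)
    fix x
    show "indicator (\<Union>(X ` I)) x \<le> (\<integral>\<^sup>+i. indicator (X i) x \<partial>count_space I)"
    proof (cases "x \<in> \<Union>(X ` I)")
      case True
      then obtain j where "j \<in> I" "x \<in> X j" by auto
      then show ?thesis
        using True nn_integral_ge_point[of j I "\<lambda>i. indicator (X i) x"] by simp
    qed simp
  qed
  also have "\<dots> = (\<integral>\<^sup>+i. emeasure M (X i) \<partial>count_space I)"
    using I by (auto simp: nn_integral_count_space_nn_integral intro!: nn_integral_cong)
  finally show ?thesis .
qed

lemma bij_betw_snoc_lists:
  "bij_betw (\<lambda>(xs, i). xs @ [i]) ({xs. length xs = N} \<times> UNIV) {xs. length xs = Suc N}"
  by (rule bij_betwI[where g = "\<lambda>xs. (butlast xs, last xs)"])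
     (auto intro: append_butlast_last_id)

lemma nn_integral_lists_prod_nth:
  fixes p :: "nat \<Rightarrow> 'a :: countable \<Rightarrow> ennreal"
  shows "(\<integral>\<^sup>+xs. (\<Prod>j<N. p j (xs ! j)) \<partial>count_space {xs. length xs = N})
     = (\<Prod>j<N. \<integral>\<^sup>+i. p j i \<partial>count_space UNIV)"
proof (induction N)
  case 0
  have "{xs :: 'a list. length xs = 0} = {[]}" by auto
  then show ?case by (simp add: nn_integral_count_space_finite)
next
  case (Suc N)
  let ?A = "{xs :: 'a list. length xs = N}"
  have "(\<integral>\<^sup>+xs. (\<Prod>j<Suc N. p j (xs ! j)) \<partial>count_space {xs. length xs = Suc N})
      = (\<integral>\<^sup>+z. (\<Prod>j<Suc N. p j ((fst z @ [snd z]) ! j)) \<partial>count_space (?A \<times> UNIV))"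
    by (subst nn_integral_bij_count_space[OF bij_betw_snoc_lists, symmetric])
       (simp add: case_prod_beta)
  also have "\<dots> = (\<integral>\<^sup>+z. (\<Prod>j<N. p j (fst z ! j)) * p N (snd z) \<partial>count_space ?A \<Otimes>\<^sub>M count_space UNIV)"
    by (auto simp: pair_measure_countable nth_append intro!: nn_integral_cong prod.cong)
  also have "\<dots> = (\<integral>\<^sup>+xs. \<integral>\<^sup>+i. (\<Prod>j<N. p j (xs ! j)) * p N i \<partial>count_space UNIV \<partial>count_space ?A)"
    by (subst sigma_finite_measure.nn_integral_fst[symmetric])
      (auto intro: sigma_finite_measure_count_space_countable simp: pair_measure_countable)
  also have "\<dots> = (\<integral>\<^sup>+xs. (\<Prod>j<N. p j (xs ! j)) \<partial>count_space ?A) * (\<integral>\<^sup>+i. p N i \<partial>count_space UNIV)"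
    by (simp add: nn_integral_cmult nn_integral_multc)
  finally show ?case
    using Suc by simp
qed

lemma nn_integral_tail_pmf:
  fixes \<mu> :: "nat pmf"
  shows "(\<integral>\<^sup>+i. emeasure (measure_pmf \<mu>) {k. i < k \<and> P k} \<partial>count_space UNIV)
     = (\<integral>\<^sup>+k. of_nat k * indicator {k. P k} k \<partial>measure_pmf \<mu>)"
proof -
  have inner: "(\<integral>\<^sup>+i. indicator {k. i < k \<and> P k} k \<partial>count_space UNIV) = of_nat k * indicator {k. P k} k"
    for k :: nat
    by (subst nn_integral_count_space'[where A = "{..<k}"]) (auto simp: indicator_def)
  have "(\<integral>\<^sup>+i. emeasure (measure_pmf \<mu>) {k. i < k \<and> P k} \<partial>count_space UNIV)
     = (\<integral>\<^sup>+i. \<integral>\<^sup>+k. indicator {k. i < k \<and> P k} k \<partial>measure_pmf \<mu> \<partial>count_space UNIV)"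
    by simp
  also have "\<dots> = (\<integral>\<^sup>+k. \<integral>\<^sup>+i. indicator {k. i < k \<and> P k} k \<partial>count_space UNIV \<partial>measure_pmf \<mu>)"
    by (rule nn_integral_count_space_nn_integral[symmetric]) auto
  finally show ?thesis
    by (simp add: inner)
qed

lemma nn_integral_pmf_of_nat_indicator:
  fixes \<mu> :: "nat pmf"
  assumes "integrable (measure_pmf \<mu>) real"
  shows "(\<integral>\<^sup>+k. of_nat k * indicator A k \<partial>measure_pmf \<mu>) = ennreal (\<integral>k. real k * indicator A k \<partial>measure_pmf \<mu>)"
proof -
  have "(\<integral>\<^sup>+k. of_nat k * indicator A k \<partial>measure_pmf \<mu>) = (\<integral>\<^sup>+k. ennreal (real k * indicator A k) \<partial>measure_pmf \<mu>)"
    by (intro nn_integral_cong) (auto simp: indicator_def ennreal_of_nat_eq_real_of_nat)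
  also have "\<dots> = ennreal (\<integral>k. real k * indicator A k \<partial>measure_pmf \<mu>)"
    using assms by (intro nn_integral_eq_integral integrable_real_mult_indicator) auto
  finally show ?thesis .
qed

lemma emeasure_GW_path_cylinder:
  fixes \<mu> :: "nat pmf"
  assumes "length x = N"
  shows "emeasure (GW \<mu>) {\<omega> \<in> space (GW \<mu>). \<forall>j<N. \<omega> (take j x) \<in> S j}
     = (\<Prod>j<N. emeasure (measure_pmf \<mu>) (S j))"
proof -
  interpret product_prob_space "\<lambda>_. measure_pmf \<mu>" "UNIV :: nat list set"
    by unfold_locales
  let ?J = "(\<lambda>j. take j x) ` {..<N}"
  have inj: "inj_on (\<lambda>j. take j x) {..<N}"
    using assms by (intro inj_onI) (metis length_take lessThan_iff min.absorb4 min.strict_order_iff)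
  have "{\<omega> \<in> space (GW \<mu>). \<forall>j<N. \<omega> (take j x) \<in> S j} = {\<omega> \<in> space (GW \<mu>). \<forall>u\<in>?J. \<omega> u \<in> S (length u)}"
    using assms by auto
  also have "emeasure (GW \<mu>) \<dots> = (\<Prod>u\<in>?J. emeasure (measure_pmf \<mu>) (S (length u)))"
    unfolding GW_def by (rule emeasure_PiM_Collect) auto
  also have "\<dots> = (\<Prod>j<N. emeasure (measure_pmf \<mu>) (S j))"
    using assms by (simp add: prod.reindex[OF inj])
  finally show ?thesis .
qed

lemma emeasure_GW_ex_path_le:
  fixes \<mu> :: "nat pmf"
  shows "emeasure (GW \<mu>) {\<omega> \<in> space (GW \<mu>). \<exists>x. length x = N \<and> (\<forall>j<N. \<omega> (take j x) \<in> S j (x ! j))}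
     \<le> (\<Prod>j<N. \<integral>\<^sup>+i. emeasure (measure_pmf \<mu>) (S j i) \<partial>count_space UNIV)"
proof -
  define C where "C x = {\<omega> \<in> space (GW \<mu>). \<forall>j<N. \<omega> (take j x) \<in> S j (x ! j)}" for x
  have [measurable]: "C x \<in> sets (GW \<mu>)" for x
    unfolding C_def GW_def by measurable
  have "{\<omega> \<in> space (GW \<mu>). \<exists>x. length x = N \<and> (\<forall>j<N. \<omega> (take j x) \<in> S j (x ! j))}
      = \<Union>(C ` {x. length x = N})"
    by (auto simp: C_def)
  also have "emeasure (GW \<mu>) \<dots> \<le> (\<integral>\<^sup>+x. emeasure (GW \<mu>) (C x) \<partial>count_space {x. length x = N})"
    by (rule emeasure_UN_countable_le) auto
  also have "\<dots> = (\<integral>\<^sup>+x. (\<Prod>j<N. emeasure (measure_pmf \<mu>) (S j (x ! j))) \<partial>count_space {x. length x = N})"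
    by (intro nn_integral_cong) (simp add: C_def emeasure_GW_path_cylinder)
  also have "\<dots> = (\<Prod>j<N. \<integral>\<^sup>+i. emeasure (measure_pmf \<mu>) (S j i) \<partial>count_space UNIV)"
    by (rule nn_integral_lists_prod_nth)
  finally show ?thesis .
qed

lemma emeasure_GW_ex_tree_path_le:
  fixes \<mu> :: "nat pmf"
  shows "emeasure (GW \<mu>) {\<omega> \<in> space (GW \<mu>). \<exists>x. length x = N \<and> in_tree \<omega> x \<and> (\<forall>j<N. P j (\<omega> (take j x)))}
     \<le> (\<Prod>j<N. \<integral>\<^sup>+k. of_nat k * indicator {k. P j k} k \<partial>measure_pmf \<mu>)"
proof -
  have "{\<omega> \<in> space (GW \<mu>). \<exists>x. length x = N \<and> in_tree \<omega> x \<and> (\<forall>j<N. P j (\<omega> (take j x)))}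
      = {\<omega> \<in> space (GW \<mu>). \<exists>x. length x = N \<and> (\<forall>j<N. \<omega> (take j x) \<in> {k. x ! j < k \<and> P j k})}"
    by (auto simp: in_tree_def)
  then show ?thesis
    using emeasure_GW_ex_path_le[of \<mu> N "\<lambda>j i. {k. i < k \<and> P j k}"]
    by (simp only: nn_integral_tail_pmf)
qed

definition tail_mean :: "nat pmf \<Rightarrow> nat \<Rightarrow> real" where
  "tail_mean \<mu> K = (\<integral>k. real k * indicator {K..} k \<partial>measure_pmf \<mu>)"

lemma tail_mean_nonneg: "0 \<le> tail_mean \<mu> K"
  unfolding tail_mean_def by (intro integral_nonneg_AE) (auto simp: indicator_def)

lemma tendsto_tail_mean_zero:
  assumes "integrable (measure_pmf \<mu>) real"
  shows "tail_mean \<mu> \<longlonglongrightarrow> 0"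
proof -
  have "(\<lambda>K. \<integral>k. real k * indicator {K..} k \<partial>measure_pmf \<mu>) \<longlonglongrightarrow> (\<integral>k. 0 \<partial>measure_pmf \<mu>)"
  proof (rule integral_dominated_convergence[where w = real])
    show "AE k in measure_pmf \<mu>. (\<lambda>K. real k * indicator {K..} k) \<longlonglongrightarrow> 0"
    proof (rule AE_I2)
      fix k :: nat
      have "\<forall>\<^sub>F K in sequentially. real k * indicator {K..} k = 0"
        using eventually_gt_at_top[of k] by eventually_elim (auto simp: indicator_def)
      then show "(\<lambda>K. real k * indicator {K..} k) \<longlonglongrightarrow> 0"
        by (rule tendsto_eventually)
    qed
  qed (auto simp: assms indicator_def)
  then show ?thesis
    by (simp add: tail_mean_def[abs_def])
qed

lemma sets_GW_small_degree_ancestor: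
  "{\<omega> \<in> space (GW \<mu>). \<forall>x \<in> generation \<omega> N. \<exists>y. prefix y x \<and> L \<le> int (length y) \<and> real (tree_deg \<omega> y) \<le> t}
     \<in> sets (GW \<mu>)"
proof -
  have "{\<omega> \<in> space (GW \<mu>). \<forall>x \<in> generation \<omega> N. \<exists>y. prefix y x \<and> L \<le> int (length y) \<and> real (tree_deg \<omega> y) \<le> t}
     = {\<omega> \<in> space (PiM UNIV (\<lambda>_. measure_pmf \<mu>)). \<forall>x.
         (\<forall>k < length x. x ! k < \<omega> (take k x)) \<and> length x = N \<longrightarrow>
         (\<exists>y. prefix y x \<and> L \<le> int (length y) \<and> real (\<omega> y + (if y = [] then 0 else 1)) \<le> t)}"
    by (auto simp: GW_def generation_def in_tree_def tree_deg_def)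
  also have "\<dots> \<in> sets (PiM UNIV (\<lambda>_. measure_pmf \<mu>))"
    by measurable
  finally show ?thesis
    by (simp add: GW_def)
qed

lemma large_offspring_if_no_small_degree_ancestor:
  assumes "\<And>y. prefix y x \<Longrightarrow> l \<le> length y \<Longrightarrow> t < real (tree_deg \<omega> y)"
    and "1 \<le> l" "l \<le> j" "j < length x"
  shows "nat \<lfloor>t\<rfloor> \<le> \<omega> (take j x)"
proof -
  have "t < real (tree_deg \<omega> (take j x))"
    using assms by (intro assms(1)) (auto intro: take_is_prefix)
  moreover have "take j x \<noteq> []"
    using assms by auto
  ultimately show ?thesis
    by (simp add: tree_deg_def nat_le_iff floor_le_iff)
qed

lemma prod_lessThan_if_less:
  assumes "l \<le> N"
  shows "(\<Prod>j<N. if j < l then a else b) = a ^ l * b ^ (N - l)"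
proof -
  have "{..<N} \<inter> {j. j < l} = {..<l}" "{..<N} \<inter> - {j. j < l} = {l..<N}"
    using assms by auto
  then show ?thesis
    by (simp add: prod.If_cases)
qed

lemma prob_GW_small_degree_ancestor_ge:
  fixes \<mu> :: "nat pmf" and L :: int and N :: nat and t :: real
  assumes \<mu>: "integrable (measure_pmf \<mu>) real" and L: "1 \<le> L" "L \<le> int N"
  shows "1 - measure_pmf.expectation \<mu> real ^ nat L * tail_mean \<mu> (nat \<lfloor>t\<rfloor>) ^ (N - nat L)
    \<le> measure (GW \<mu>) {\<omega> \<in> space (GW \<mu>). \<forall>x \<in> generation \<omega> N.
         \<exists>y. prefix y x \<and> L \<le> int (length y) \<and> real (tree_deg \<omega> y) \<le> t}"
    (is "1 - ?bound \<le> measure _ ?G")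
proof -
  define m l K where "m = measure_pmf.expectation \<mu> real" and "l = nat L" and "K = nat \<lfloor>t\<rfloor>"
  interpret prob_space "GW \<mu>"
    unfolding GW_def by (intro prob_space_PiM prob_space_measure_pmf)
  let ?B = "{\<omega> \<in> space (GW \<mu>). \<exists>x. length x = N \<and> in_tree \<omega> x \<and> (\<forall>j<N. l \<le> j \<longrightarrow> K \<le> \<omega> (take j x))}"
  have G: "?G \<in> sets (GW \<mu>)"
    by (rule sets_GW_small_degree_ancestor)
  have B: "?B \<in> sets (GW \<mu>)"
    unfolding GW_def in_tree_def by measurable
  have "space (GW \<mu>) - ?G \<subseteq> ?B"
  proof
    fix \<omega> assume "\<omega> \<in> space (GW \<mu>) - ?G"
    then obtain x where \<omega>: "\<omega> \<in> space (GW \<mu>)" and x: "length x = N" "in_tree \<omega> x"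
      and "\<And>y. prefix y x \<Longrightarrow> L \<le> int (length y) \<Longrightarrow> t < real (tree_deg \<omega> y)"
      by (auto simp: generation_def not_le) (metis not_less)
    then have no_small: "\<And>y. prefix y x \<Longrightarrow> l \<le> length y \<Longrightarrow> t < real (tree_deg \<omega> y)"
      by (simp add: l_def nat_le_iff)
    show "\<omega> \<in> ?B"
      using \<omega> x L large_offspring_if_no_small_degree_ancestor[OF no_small]
      by (auto simp: K_def l_def)
  qed
  then have "emeasure (GW \<mu>) (space (GW \<mu>) - ?G)
      \<le> (\<Prod>j<N. \<integral>\<^sup>+k. of_nat k * indicator {k. l \<le> j \<longrightarrow> K \<le> k} k \<partial>measure_pmf \<mu>)"
    using B by (intro order_trans[OF emeasure_mono emeasure_GW_ex_tree_path_le])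
  also have "\<dots> = (\<Prod>j<N. ennreal (if j < l then m else tail_mean \<mu> K))"
    using nn_integral_pmf_of_nat_indicator[OF \<mu>]
    by (intro prod.cong) (auto simp: m_def tail_mean_def atLeast_def not_less)
  also have "\<dots> = ennreal ?bound"
    using L by (simp add: prod_ennreal tail_mean_nonneg m_def l_def K_def prod_lessThan_if_less)
  finally have "measure (GW \<mu>) (space (GW \<mu>) - ?G) \<le> ?bound"
    by (simp add: emeasure_eq_measure ennreal_le_iff tail_mean_nonneg)
  then show ?thesis
    using G by (simp add: prob_compl)
qed

lemma power_mult_power_le_powr_neg2:
  fixes m e \<epsilon> c :: real and n l N :: nat
  assumes "0 < m" "0 < c" "0 \<le> e" "e \<le> \<epsilon>" "0 < \<epsilon>" "\<epsilon> < 1" "1 \<le> n"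
    and l: "c * ln (real n) \<le> real l" "l \<le> N"
    and N: "real l * (1 + (ln m + 2 / c) / - ln \<epsilon>) \<le> real N"
  shows "m ^ l * e ^ (N - l) \<le> real n powr -2"
proof -
  define \<delta> where "\<delta> = (ln m + 2 / c) / - ln \<epsilon>"
  have "ln \<epsilon> < 0"
    using assms by simp
  then have \<delta>_ln: "\<delta> * ln \<epsilon> = - (ln m + 2 / c)"
    by (simp add: \<delta>_def field_simps)
  have "\<delta> * real l \<le> real (N - l)"
    using N l by (simp add: \<delta>_def of_nat_diff algebra_simps)
  have "e ^ (N - l) \<le> \<epsilon> ^ (N - l)"
    using assms by (intro power_mono)
  also have "\<dots> = \<epsilon> powr real (N - l)"
    using assms by (intro powr_realpow[symmetric])
  also have "\<dots> \<le> \<epsilon> powr (\<delta> * real l)"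
    using assms \<open>\<delta> * real l \<le> real (N - l)\<close> by (intro powr_mono') auto
  finally have "m ^ l * e ^ (N - l) \<le> m ^ l * \<epsilon> powr (\<delta> * real l)"
    using assms by (intro mult_left_mono) auto
  also have "\<dots> = exp (real l * ln m) * exp (\<delta> * real l * ln \<epsilon>)"
    using assms by (simp add: powr_def exp_of_nat_mult)
  also have "\<dots> = exp (real l * (ln m + \<delta> * ln \<epsilon>))"
    by (simp add: exp_add[symmetric] algebra_simps)
  also have "\<dots> = exp (- 2 / c * real l)"
    using \<delta>_ln by simp
  also have "\<dots> \<le> exp (- 2 * ln (real n))"
    using assms l by (simp add: field_simps)
  also have "\<dots> = real n powr -2"
    using assms by (simp add: powr_def)
  finally show ?thesis .
qed

lemma tendsto_divide_minus_ln_zero: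
  fixes f :: "'a \<Rightarrow> real"
  assumes "(f \<longlongrightarrow> 0) F" "\<forall>\<^sub>F x in F. 0 < f x"
  shows "((\<lambda>x. a / - ln (f x)) \<longlongrightarrow> 0) F"
proof -
  have "filterlim f (at_right 0) F"
    using assms by (rule tendsto_imp_filterlim_at_right)
  then have "filterlim (\<lambda>x. - ln (f x)) at_top F"
    by (simp add: filterlim_uminus_at_top filterlim_compose[OF ln_at_0])
  then show ?thesis
    by (intro tendsto_divide_0[OF tendsto_const] filterlim_at_top_imp_at_infinity)
qed

lemma prob_GW_small_degree_ancestor_ge_powr:
  fixes \<mu> :: "nat pmf" and L :: int and n :: nat and c \<epsilon> :: real
  defines "m \<equiv> measure_pmf.expectation \<mu> real"
  assumes \<mu>: "integrable (measure_pmf \<mu>) real" "1 < m"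
    and c: "0 < c" and n: "1 \<le> n" "1 \<le> c * ln (real n)" and L: "c * ln (real n) \<le> real_of_int L"
    and \<epsilon>: "tail_mean \<mu> (nat \<lfloor>ln (ln (real n))\<rfloor>) \<le> \<epsilon>" "0 < \<epsilon>" "\<epsilon> < 1"
  shows "1 - real n powr -2 \<le> measure (GW \<mu>) {\<omega> \<in> space (GW \<mu>).
     \<forall>x \<in> generation \<omega> (nat \<lceil>real_of_int L * (1 + (ln m + 2 / c) / - ln \<epsilon>)\<rceil>).
       \<exists>y. prefix y x \<and> L \<le> int (length y) \<and> real (tree_deg \<omega> y) \<le> ln (ln (real n))}"
proof -
  define \<delta> where "\<delta> = (ln m + 2 / c) / - ln \<epsilon>"
  define N where "N = nat \<lceil>real_of_int L * (1 + \<delta>)\<rceil>"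
  have "0 < ln m + 2 / c"
    using \<mu> c by (simp add: add_pos_pos)
  then have "0 \<le> \<delta>"
    using \<epsilon> unfolding \<delta>_def by (intro divide_nonneg_pos) auto
  moreover have L1: "1 \<le> L"
    using n L by linarith
  ultimately have N: "real_of_int L * (1 + \<delta>) \<le> real N"
    unfolding N_def by linarith
  moreover have "real_of_int L \<le> real_of_int L * (1 + \<delta>)"
    using L1 \<open>0 \<le> \<delta>\<close> by simp
  ultimately have "L \<le> int N"
    by linarith
  have l: "c * ln (real n) \<le> real (nat L)" "nat L \<le> N" "real (nat L) * (1 + \<delta>) \<le> real N"
    using L L1 N \<open>L \<le> int N\<close> by auto
  have "0 < m"
    using \<mu> by simp
  then have "m ^ nat L * tail_mean \<mu> (nat \<lfloor>ln (ln (real n))\<rfloor>) ^ (N - nat L) \<le> real n powr -2"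
    using power_mult_power_le_powr_neg2[OF _ c tail_mean_nonneg \<epsilon> n(1) l[unfolded \<delta>_def]] by simp
  then have "1 - real n powr -2 \<le> 1 - m ^ nat L * tail_mean \<mu> (nat \<lfloor>ln (ln (real n))\<rfloor>) ^ (N - nat L)"
    by simp
  also have "\<dots> \<le> measure (GW \<mu>) {\<omega> \<in> space (GW \<mu>). \<forall>x \<in> generation \<omega> N.
       \<exists>y. prefix y x \<and> L \<le> int (length y) \<and> real (tree_deg \<omega> y) \<le> ln (ln (real n))}"
    using \<mu>(1) L1 \<open>L \<le> int N\<close> unfolding m_def by (rule prob_GW_small_degree_ancestor_ge)
  finally show ?thesis
    by (simp add: N_def \<delta>_def)
qed

lemma tail_mean_lnln_majorant:
  fixes \<mu> :: "nat pmf"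
  assumes "integrable (measure_pmf \<mu>) real"
  obtains \<epsilon> :: "nat \<Rightarrow> real" where "\<epsilon> \<longlonglongrightarrow> 0"
    "\<forall>\<^sub>F n in sequentially. 0 < \<epsilon> n \<and> \<epsilon> n < 1 \<and> tail_mean \<mu> (nat \<lfloor>ln (ln (real n))\<rfloor>) \<le> \<epsilon> n"
proof -
  \<comment> \<open>The tail mean vanishes for bounded offspring; the padding \<open>1 / n\<close> keeps \<open>ln \<epsilon>\<close> finite.\<close>
  define \<epsilon> where "\<epsilon> n = max (tail_mean \<mu> (nat \<lfloor>ln (ln (real n))\<rfloor>)) (1 / real n)" for n :: nat
  have "filterlim (\<lambda>n::nat. nat \<lfloor>ln (ln (real n))\<rfloor>) sequentially sequentially"
    by (intro filterlim_compose[OF filterlim_nat_sequentially] filterlim_compose[OF filterlim_floor_sequentially]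
        filterlim_compose[OF ln_at_top] filterlim_real_sequentially)
  then have lim: "\<epsilon> \<longlonglongrightarrow> 0"
    using filterlim_compose[OF tendsto_tail_mean_zero[OF assms]] tendsto_max[OF _ lim_1_over_n]
    unfolding \<epsilon>_def by fastforce
  have "\<forall>\<^sub>F n in sequentially. \<epsilon> n < 1"
    using lim by (rule order_tendstoD) simp
  then have "\<forall>\<^sub>F n in sequentially. 0 < \<epsilon> n \<and> \<epsilon> n < 1 \<and> tail_mean \<mu> (nat \<lfloor>ln (ln (real n))\<rfloor>) \<le> \<epsilon> n"
    using eventually_gt_at_top[of 0] by eventually_elim (auto simp: \<epsilon>_def less_max_iff_disj)
  with lim show ?thesis
    using that by blast
qed

theorem mainTheorem14:
  fixes \<mu> :: "nat pmf" and L :: "nat \<Rightarrow> int" and c :: real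
  assumes p0: "pmf \<mu> 0 = 0"
    and mean_fin: "integrable (measure_pmf \<mu>) real"
    and mean_gt1: "measure_pmf.expectation \<mu> real > 1"
    and c_pos: "c > 0"
    and L_ge: "\<forall>n\<ge>1. real_of_int (L n) \<ge> c * ln (real n)"
  shows "\<exists>\<delta> :: nat \<Rightarrow> real. \<delta> \<longlonglongrightarrow> 0 \<and>
    (\<forall>\<^sub>F n in sequentially.
       measure (GW \<mu>)
         {\<omega> \<in> space (GW \<mu>).
            \<forall>x \<in> generation \<omega> (nat \<lceil>real_of_int (L n) * (1 + \<delta> n)\<rceil>).
              \<exists>y. prefix y x \<and> int (length y) \<ge> L n \<and>
                  real (tree_deg \<omega> y) \<le> ln (ln (real n))}
       \<ge> 1 - real n powr (-2))"
proof -
  define m where "m = measure_pmf.expectation \<mu> real"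
  obtain \<epsilon> where \<epsilon>: "\<epsilon> \<longlonglongrightarrow> 0"
    "\<forall>\<^sub>F n in sequentially. 0 < \<epsilon> n \<and> \<epsilon> n < 1 \<and> tail_mean \<mu> (nat \<lfloor>ln (ln (real n))\<rfloor>) \<le> \<epsilon> n"
    using tail_mean_lnln_majorant[OF mean_fin] by blast
  have "\<forall>\<^sub>F n in sequentially. 1 \<le> c * ln (real n)"
    using c_pos by real_asymp
  then have "\<forall>\<^sub>F n in sequentially. 1 - real n powr -2 \<le> measure (GW \<mu>) {\<omega> \<in> space (GW \<mu>).
      \<forall>x \<in> generation \<omega> (nat \<lceil>real_of_int (L n) * (1 + (ln m + 2 / c) / - ln (\<epsilon> n))\<rceil>).
        \<exists>y. prefix y x \<and> L n \<le> int (length y) \<and> real (tree_deg \<omega> y) \<le> ln (ln (real n))}"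
    using eventually_ge_at_top[of 1] \<epsilon>(2)
  proof eventually_elim
    case (elim n)
    then show ?case
      using L_ge unfolding m_def
      by (intro prob_GW_small_degree_ancestor_ge_powr[OF mean_fin mean_gt1 c_pos]) auto
  qed
  moreover have "(\<lambda>n. (ln m + 2 / c) / - ln (\<epsilon> n)) \<longlonglongrightarrow> 0"
    using \<epsilon>(1) eventually_mono[OF \<epsilon>(2)] by (intro tendsto_divide_minus_ln_zero) auto
  ultimately show ?thesis
    by blast
qed

end
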